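(* Let $\Gamma\subset PSL(2,\mathbb{R})$ be a cocompact lattice with $S=\mathbb{D}/\Gamma$ a compact Riemann surface, and let $(M,\mathcal{F})$ be as described in the context. Then every continuous function $f:M\to\mathbb{C}$ which is holomorphic along each leaf is constant on each leaf (i.e. $(M,\mathcal{F})$ is holomorphically simple).
   Context: $PSL(2,\mathbb{R})\cong PSU(1,1)$ acts on $\mathbb{D}$ and on $S^1=\partial\mathbb{D}$ by Möbius maps. Identify $S^1\times(0,2\pi)$ with the space of arcs via $(\zeta,\theta)\mapsto\{\zeta e^{it\theta}:0\le t\le1\}$; $g\in PSL(2,\mathbb{R})$ acts by sending the arc $I$ to the arc $g(I)$, and this action extends continuously to $X_0=S^1\times[0,2\pi]$ by $g(\zeta,0)=(g(\zeta),0)$, $g(\zeta,2\pi)=(g(\zeta),2\pi)$. Let $X_1\cong S^2$ be obtained from $X_0$ by collapsing each of the circles $S^1\times\{0\}$ and $S^1\times\{2\pi\}$ to a point; the action descends to $X_1$. Let $M=(\mathbb{D}\times X_1)/\Gamma$, where $\gamma$ acts by $(z,x)\mapsto(\gamma^{-1}z,\gamma^{-1}x)$, foliated by the images of $\mathbb{D}\times\{x\}$, whose leaves are Riemann surfaces covering $S$. *)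

theory Defs
  imports "HOL-Complex_Analysis.Complex_Analysis"
begin

text \<open>Elements of PSU(1,1) = PSL(2,R), realised as Moebius automorphisms of the
  unit disc (they extend to the closed disc and to the boundary circle).\<close>
definition disc_aut :: "(complex \<Rightarrow> complex) \<Rightarrow> bool" where
  "disc_aut g \<longleftrightarrow> (\<exists>a \<alpha>. norm a < 1 \<and> g = (\<lambda>z. cis \<alpha> * (z - a) / (1 - cnj a * z)))"

text \<open>A cocompact lattice in PSL(2,R) acting freely on the disc, so that
  the quotient of the disc is a compact Riemann surface.  Group operations are
  compared on the closed disc, where the Moebius maps are defined.\<close>
definition surface_group :: "(complex \<Rightarrow> complex) set \<Rightarrow> bool" where
  "surface_group \<Gamma> \<longleftrightarrow>
     (\<forall>g\<in>\<Gamma>. disc_aut g) \<and>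
     (\<exists>e\<in>\<Gamma>. \<forall>z\<in>cball 0 1. e z = z) \<and>
     (\<forall>g\<in>\<Gamma>. \<forall>h\<in>\<Gamma>. \<exists>k\<in>\<Gamma>. \<forall>z\<in>cball 0 1. k z = g (h z)) \<and>
     (\<forall>g\<in>\<Gamma>. \<exists>h\<in>\<Gamma>. \<forall>z\<in>cball 0 1. h (g z) = z \<and> g (h z) = z) \<and>
     \<comment> \<open>discrete, i.e. properly discontinuous on the disc\<close>
     (\<forall>K. compact K \<and> K \<subseteq> ball 0 1 \<longrightarrow> finite {g\<in>\<Gamma>. g ` K \<inter> K \<noteq> {}}) \<and>
     \<comment> \<open>acts freely (torsion free), so the quotient is a Riemann surface\<close>
     (\<forall>g\<in>\<Gamma>. (\<exists>z\<in>ball 0 1. g z = z) \<longrightarrow> (\<forall>w\<in>cball 0 1. g w = w)) \<and>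
     \<comment> \<open>cocompact\<close>
     (\<exists>K. compact K \<and> K \<subseteq> ball 0 1 \<and> ball 0 1 = (\<Union>g\<in>\<Gamma>. g ` K))"

definition arc_of :: "complex \<Rightarrow> real \<Rightarrow> complex set" where
  "arc_of \<zeta> \<theta> = {\<zeta> * cis (t * \<theta>) | t. t \<in> {0..1}}"

definition X0 :: "(complex \<times> real) set" where
  "X0 = sphere 0 1 \<times> {0..2*pi}"

definition arc_act :: "(complex \<Rightarrow> complex) \<Rightarrow> complex \<times> real \<Rightarrow> complex \<times> real" where
  "arc_act g p = (if snd p = 0 \<or> snd p = 2*pi then (g (fst p), snd p)
     else (THE q. q \<in> sphere 0 1 \<times> {0<..<2*pi} \<and> arc_of (fst q) (snd q) = g ` arc_of (fst p) (snd p)))"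

end

theory Submission
  imports Defs
begin

text \<open>On the two leaves through the poles \<open>t = 0\<close> and \<open>t = 2\<pi>\<close> of \<open>X\<^sub>1\<close>, \<open>F\<close> is a
  \<open>\<Gamma>\<close>-invariant holomorphic function on the disc; its modulus attains its maximum on a compact
  fundamental set, hence it is constant. On the leaf through an arc \<open>(\<zeta>, \<theta>)\<close>, let \<open>z\<close> tend to a
  boundary point \<open>p\<close> far from the arc and move \<open>z\<close> into the fundamental set by \<open>g \<in> \<Gamma>\<close>. Since \<open>z\<close>
  is close to the circle, \<open>g\<close> crushes everything away from \<open>p\<close>, so \<open>g\<close> maps the arc to a very short
  one and \<open>F(z, (\<zeta>, \<theta>)) = F(g z, g(\<zeta>, \<theta>))\<close> is close to the value \<open>c\<^sub>0\<close> of \<open>F\<close> on the leaf of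
  the pole \<open>t = 0\<close>. Finally, a bounded holomorphic function tending to \<open>c\<^sub>0\<close> along an arc of the circle
  is constant: the product of its finitely many rotates minus \<open>c\<^sub>0\<close>, by angles smaller than the arc,
  tends to \<open>0\<close> along the whole circle, so it vanishes by the maximum modulus principle.\<close>

section \<open>Arcs of the unit circle\<close>

text \<open>For points of the unit circle the sign of \<open>cyclic_orient\<close> encodes their cyclic order
  (\<open>arc_of_eq_cyclic_orient_nonpos\<close>), and disc automorphisms only multiply it by a positive
  factor (\<open>cyclic_orient_Moebius_function\<close>); this is how they are seen to map arcs to arcs.\<close>
definition cyclic_orient :: "complex \<Rightarrow> complex \<Rightarrow> complex \<Rightarrow> real" where
  "cyclic_orient z1 z2 z3 = Im ((z1 - z2) * (z2 - z3) * (z3 - z1) * cnj z1 * cnj z2 * cnj z3)"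

lemma sin_alternating_sum_eq_prod:
  "sin t - sin s + sin (s - t) = 4 * sin (s/2) * sin ((s - t)/2) * sin (t/2::real)"
proof -
  have "sin (2*b) - sin (2*a) + sin (2*a - 2*b) = 4 * sin a * sin (a - b) * sin b" for a b :: real
  proof -
    have "sin (2*a - 2*b) = sin (2*a) * cos (2*b) - cos (2*a) * sin (2*b)" by (rule sin_diff)
    then show ?thesis
      apply (simp add: sin_double cos_double sin_diff)
      apply (simp add: algebra_simps power2_eq_square)
      using sin_cos_squared_add[of a] sin_cos_squared_add[of b] by algebra
  qed
  from this[of "t/2" "s/2"] show ?thesis by (simp add: diff_divide_distrib)
qed

lemma cyclic_orient_1_cis:
  "cyclic_orient 1 (cis s) (cis t) = 8 * sin (s/2) * sin ((s - t)/2) * sin (t/2)"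
proof -
  have "(1 - cis s) * (cis s - cis t) * (cis t - 1) * cnj 1 * cnj (cis s) * cnj (cis t)
      = - cis s + cis t - cis (-t) + cis (-s) + cis (s - t) - cis (t - s)"
  proof -
    define A where "A = cis s"
    define B where "B = cis t"
    have nz: "A \<noteq> 0" "B \<noteq> 0" unfolding A_def B_def by auto
    have cnj_eq: "cnj A = inverse A" "cnj B = inverse B"
      unfolding A_def B_def by (simp_all add: cis_cnj)
    have "(1 - A) * (A - B) * (B - 1) * cnj 1 * cnj A * cnj B
        = - A + B - inverse B + inverse A + A / B - B / A"
      unfolding cnj_eq using nz by (simp add: field_simps)
    then show ?thesis unfolding A_def B_def by (simp add: cis_divide)
  qed
  then have "cyclic_orient 1 (cis s) (cis t) = 2 * (sin t - sin s + sin (s - t))"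
    unfolding cyclic_orient_def by (simp add: sin_diff)
  then show ?thesis unfolding sin_alternating_sum_eq_prod by simp
qed

lemma cyclic_orient_1_cis_nonpos_iff:
  assumes "0 \<le> s" "s < 2*pi" "0 < t" "t < 2*pi"
  shows "cyclic_orient 1 (cis s) (cis t) \<le> 0 \<longleftrightarrow> s \<le> t"
proof -
  have t: "sin (t/2) > 0" using assms by (intro sin_gt_zero) auto
  have s: "sin (s/2) \<ge> 0" using assms by (intro sin_ge_zero) auto
  show ?thesis
  proof (cases "s \<le> t")
    case True
    then have "sin ((t - s)/2) \<ge> 0" using assms by (intro sin_ge_zero) auto
    then have "sin ((s - t)/2) \<le> 0" by (metis minus_diff_eq sin_minus divide_minus_left neg_le_0_iff_le)
    then show ?thesis using True s t by (simp add: cyclic_orient_1_cis mult_nonneg_nonpos mult_nonpos_nonneg)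
  next
    case False
    then have "sin ((s - t)/2) > 0" "sin (s/2) > 0" using assms by (auto intro!: sin_gt_zero)
    then have "sin (s/2) * sin ((s - t)/2) * sin (t/2) > 0" using t by simp
    then show ?thesis using False by (simp add: cyclic_orient_1_cis mult_ac)
  qed
qed

lemma cyclic_orient_mult_unit:
  assumes "norm \<zeta> = 1"
  shows "cyclic_orient (\<zeta> * u) (\<zeta> * v) (\<zeta> * w) = cyclic_orient u v w"
proof -
  have unit: "\<zeta> * cnj \<zeta> = 1" using assms by (simp add: complex_norm_square[symmetric])
  have "(\<zeta> * u - \<zeta> * v) * (\<zeta> * v - \<zeta> * w) * (\<zeta> * w - \<zeta> * u) * cnj (\<zeta> * u) * cnj (\<zeta> * v) * cnj (\<zeta> * w)
     = (\<zeta> * cnj \<zeta>)^3 * ((u - v) * (v - w) * (w - u) * cnj u * cnj v * cnj w)"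
    unfolding complex_cnj_mult power3_eq_cube by algebra
  then show ?thesis unfolding cyclic_orient_def by (simp only: unit power_one mult_1)
qed

lemma inj_on_cis: "inj_on cis {0..<2*pi}"
proof
  fix s t assume "s \<in> {0..<2*pi}" "t \<in> {0..<2*pi}" "cis s = cis t"
  then show "s = t" using Arg2pi_unique[of 1 s "cis t"] Arg2pi_unique[of 1 t "cis t"] by (simp add: cis_conv_exp)
qed

lemma unit_eq_mult_cis:
  assumes "norm z = 1" "norm \<zeta> = 1"
  obtains s where "z = \<zeta> * cis s" "0 \<le> s" "s < 2*pi"
proof
  have "norm (z / \<zeta>) = 1" using assms by (simp add: norm_divide)
  then have "cis (Arg2pi (z / \<zeta>)) = z / \<zeta>" by (metis complex_norm_eq_1_exp cis_conv_exp)
  then show "z = \<zeta> * cis (Arg2pi (z / \<zeta>))" using assms by auto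
  show "0 \<le> Arg2pi (z / \<zeta>)" "Arg2pi (z / \<zeta>) < 2*pi" using Arg2pi by auto
qed

lemma start_mem_arc_of: "\<zeta> \<in> arc_of \<zeta> \<theta>"
  unfolding arc_of_def by (rule CollectI, rule exI[of _ 0]) auto

lemma norm_mem_arc_of: "norm \<zeta> = 1 \<Longrightarrow> z \<in> arc_of \<zeta> \<theta> \<Longrightarrow> norm z = 1"
  unfolding arc_of_def by (auto simp: norm_mult)

lemma mult_cis_mem_arc_of_iff:
  assumes "\<zeta> \<noteq> 0" "0 < \<theta>" "\<theta> < 2*pi" "0 \<le> s" "s < 2*pi"
  shows "\<zeta> * cis s \<in> arc_of \<zeta> \<theta> \<longleftrightarrow> s \<le> \<theta>"
proof
  assume "\<zeta> * cis s \<in> arc_of \<zeta> \<theta>"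
  then obtain t where t: "t \<in> {0..1}" "cis s = cis (t * \<theta>)" using assms(1) unfolding arc_of_def by auto
  moreover have "0 \<le> t * \<theta>" "t * \<theta> \<le> \<theta>" using t assms by (auto simp: mult_le_cancel_right1)
  moreover have "t * \<theta> < 2*pi" using \<open>t * \<theta> \<le> \<theta>\<close> assms(3) by linarith
  ultimately have "s = t * \<theta>" using assms by (intro inj_onD[OF inj_on_cis]) auto
  then show "s \<le> \<theta>" using \<open>t * \<theta> \<le> \<theta>\<close> by simp
next
  assume "s \<le> \<theta>"
  then have "s / \<theta> \<in> {0..1}" "\<zeta> * cis s = \<zeta> * cis (s / \<theta> * \<theta>)" using assms by auto
  then show "\<zeta> * cis s \<in> arc_of \<zeta> \<theta>" unfolding arc_of_def by blast
qed

lemma arc_of_eq_cyclic_orient_nonpos: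
  assumes \<zeta>: "norm \<zeta> = 1" and \<theta>: "0 < \<theta>" "\<theta> < 2*pi"
  shows "arc_of \<zeta> \<theta> = {z. norm z = 1 \<and> cyclic_orient \<zeta> z (\<zeta> * cis \<theta>) \<le> 0}"
proof -
  have "z \<in> arc_of \<zeta> \<theta> \<longleftrightarrow> cyclic_orient \<zeta> z (\<zeta> * cis \<theta>) \<le> 0" if z: "norm z = 1" for z
  proof -
    obtain s where s: "z = \<zeta> * cis s" "0 \<le> s" "s < 2*pi" using unit_eq_mult_cis[OF z \<zeta>] .
    have "\<zeta> \<noteq> 0" using \<zeta> by auto
    have "cyclic_orient \<zeta> z (\<zeta> * cis \<theta>) = cyclic_orient 1 (cis s) (cis \<theta>)"
      using cyclic_orient_mult_unit[OF \<zeta>, of 1 "cis s" "cis \<theta>"] s(1) by simp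
    then show ?thesis
      using mult_cis_mem_arc_of_iff[of \<zeta> \<theta> s] cyclic_orient_1_cis_nonpos_iff[of s \<theta>] s \<open>\<zeta> \<noteq> 0\<close> \<theta> by auto
  qed
  then show ?thesis using norm_mem_arc_of[OF \<zeta>] by blast
qed

lemma norm_arc_of_plus_midpoint_ge:
  assumes "norm \<zeta> = 1" "0 \<le> \<theta>" "\<theta> \<le> 2*pi" "w \<in> arc_of \<zeta> \<theta>"
  shows "norm (w + \<zeta> * cis (\<theta>/2)) \<ge> 1 + cos (\<theta>/2)"
proof -
  obtain t where t: "t \<in> {0..1}" "w = \<zeta> * cis (t * \<theta>)" using assms(4) unfolding arc_of_def by auto
  define s where "s = t * \<theta>"
  have s: "0 \<le> s" "s \<le> \<theta>" unfolding s_def using t assms by (auto intro: mult_left_le_one_le)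
  have "w + \<zeta> * cis (\<theta>/2) = \<zeta> * cis (\<theta>/2) * (cis (s - \<theta>/2) + 1)"
    unfolding t s_def[symmetric] by (simp add: algebra_simps cis_mult)
  then have "norm (w + \<zeta> * cis (\<theta>/2)) = norm (cis (s - \<theta>/2) + 1)" using assms by (simp add: norm_mult)
  also have "\<dots> \<ge> Re (cis (s - \<theta>/2) + 1)" by (rule complex_Re_le_cmod)
  finally have "norm (w + \<zeta> * cis (\<theta>/2)) \<ge> cos (s - \<theta>/2) + 1" by simp
  moreover have "\<bar>s - \<theta>/2\<bar> \<le> \<theta>/2" using s by (auto simp: abs_if)
  then have "cos (\<theta>/2) \<le> cos \<bar>s - \<theta>/2\<bar>" using assms by (intro cos_monotone_0_pi_le) auto
  ultimately show ?thesis by simp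
qed

lemma arc_of_angle_lt:
  assumes \<zeta>: "norm \<zeta> = 1" and \<theta>: "0 < \<theta>" "\<theta> < 2*pi" and s: "0 \<le> s" "s < 2*pi"
    and small: "\<And>w w'. w \<in> arc_of \<zeta> \<theta> \<Longrightarrow> w' \<in> arc_of \<zeta> \<theta> \<Longrightarrow> norm (w - w') < sin s"
  shows "\<theta> < s"
proof (rule ccontr)
  assume "\<not> \<theta> < s"
  moreover have "\<zeta> \<noteq> 0" using \<zeta> by auto
  ultimately have "\<zeta> * cis s \<in> arc_of \<zeta> \<theta>" using mult_cis_mem_arc_of_iff[of \<zeta> \<theta> s] \<theta> s by auto
  then have "norm (\<zeta> - \<zeta> * cis s) < sin s" using small start_mem_arc_of by blast
  moreover have "\<zeta> - \<zeta> * cis s = \<zeta> * (1 - cis s)" by (simp add: algebra_simps)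
  then have "norm (\<zeta> - \<zeta> * cis s) = norm (1 - cis s)" using \<zeta> by (simp add: norm_mult)
  moreover have "\<bar>Im (1 - cis s)\<bar> \<le> norm (1 - cis s)" by (rule abs_Im_le_cmod)
  ultimately show False by simp
qed

section \<open>Automorphisms of the disc\<close>

lemma Moebius_function_cis: "Moebius_function t w z = cis t * (z - w) / (1 - cnj w * z)"
  by (simp add: Moebius_function_def cis_conv_exp)

lemma disc_aut_iff_Moebius: "disc_aut g \<longleftrightarrow> (\<exists>w t. norm w < 1 \<and> g = Moebius_function t w)"
  by (auto simp: disc_aut_def fun_eq_iff Moebius_function_cis)

lemma Moebius_denom_nonzero:
  assumes "norm w < 1" "norm z \<le> 1"
  shows "1 - cnj w * z \<noteq> 0"
proof
  assume "1 - cnj w * z = 0"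
  then have "norm (cnj w * z) = 1" by (metis eq_iff_diff_eq_0 norm_one)
  moreover have "norm (cnj w * z) < 1" using assms
    by (simp add: norm_mult) (meson le_less_trans mult_left_le norm_ge_zero)
  ultimately show False by simp
qed

lemma norm_Moebius_denom_squared:
  "(norm (1 - cnj w * z))^2 - (norm (z - w))^2 = (1 - (norm w)^2) * (1 - (norm z)^2)"
  unfolding cmod_power2 by (simp add: power2_eq_square algebra_simps)

lemma norm_Moebius_denom_sphere: "norm z = 1 \<Longrightarrow> norm (1 - cnj w * z) = norm (z - w)"
  using norm_Moebius_denom_squared[of w z] by (simp add: power2_eq_iff_nonneg)

lemma norm_Moebius_function_sphere:
  assumes "norm w < 1" "norm z = 1"
  shows "norm (Moebius_function t w z) = 1"
proof -
  have "1 - cnj w * z \<noteq> 0" "z \<noteq> w" using Moebius_denom_nonzero assms by auto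
  then show ?thesis
    using norm_Moebius_denom_sphere[OF assms(2), of w] by (simp add: Moebius_function_cis norm_mult norm_divide)
qed

lemma disc_aut_sphere: "disc_aut g \<Longrightarrow> norm z = 1 \<Longrightarrow> norm (g z) = 1"
  unfolding disc_aut_iff_Moebius using norm_Moebius_function_sphere by blast

lemma disc_aut_ball: "disc_aut g \<Longrightarrow> norm z < 1 \<Longrightarrow> norm (g z) < 1"
  unfolding disc_aut_iff_Moebius using Moebius_function_norm_lt_1 by blast

lemma Moebius_function_diff:
  assumes "norm w < 1" "norm z \<le> 1" "norm z' \<le> 1"
  shows "Moebius_function t w z - Moebius_function t w z'
    = cis t * (1 - w * cnj w) * (z - z') / ((1 - cnj w * z) * (1 - cnj w * z'))"
proof -
  have "1 - cnj w * z \<noteq> 0" "1 - cnj w * z' \<noteq> 0" using Moebius_denom_nonzero assms by auto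
  then show ?thesis unfolding Moebius_function_cis by (simp add: field_simps)
qed

lemma Moebius_function_inverse:
  assumes "norm w < 1" "norm u \<le> 1"
  shows "Moebius_function t w (Moebius_function (-t) (- cis t * w) u) = u"
proof -
  define D where "D = 1 + cnj w * cis (-t) * u"
  define v where "v = Moebius_function (-t) (- cis t * w) u"
  have D: "D \<noteq> 0" using Moebius_denom_nonzero[of "- cis t * w" u] assms
    by (simp add: D_def norm_mult cis_cnj mult_ac)
  have "(norm w)^2 < 1" using assms(1) by (simp add: power_less_one_iff abs_square_less_1)
  then have w: "1 - w * cnj w \<noteq> 0"
    unfolding complex_norm_square[symmetric] by (metis of_real_1 of_real_eq_iff right_minus_eq less_irrefl)
  have v: "v = cis (-t) * (u + cis t * w) / D" unfolding v_def D_def Moebius_function_cis by (simp add: cis_cnj)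
  have vw: "v - w = cis (-t) * u * (1 - w * cnj w) / D"
    using D unfolding v by (simp add: D_def field_simps cis_mult)
  have den: "1 - cnj w * v = (1 - w * cnj w) / D"
    using D unfolding v by (simp add: D_def field_simps cis_mult)
  have "Moebius_function t w v = cis t * (v - w) / (1 - cnj w * v)" by (rule Moebius_function_cis)
  also have "\<dots> = u" unfolding vw den using D w by (simp add: field_simps cis_mult)
  finally show ?thesis unfolding v_def .
qed

lemma Moebius_function_inj_on_cball:
  assumes "norm w < 1" "norm z \<le> 1" "norm z' \<le> 1" "Moebius_function t w z = Moebius_function t w z'"
  shows "z = z'"
proof -
  have "(norm w)^2 < 1" using assms(1) by (simp add: power_less_one_iff abs_square_less_1)
  then have "1 - w * cnj w \<noteq> 0"
    unfolding complex_norm_square[symmetric] by (metis of_real_1 of_real_eq_iff right_minus_eq less_irrefl)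
  moreover have "1 - cnj w * z \<noteq> 0" "1 - cnj w * z' \<noteq> 0" using Moebius_denom_nonzero assms by auto
  ultimately show ?thesis using Moebius_function_diff[OF assms(1-3), of t] assms(4) by simp
qed

lemma Moebius_function_sphere_onto:
  assumes "norm w < 1" "norm u = 1"
  obtains z where "norm z = 1" "Moebius_function t w z = u"
proof
  have "norm (- cis t * w) < 1" using assms(1) by (simp add: norm_mult)
  then show "norm (Moebius_function (-t) (- cis t * w) u) = 1" using norm_Moebius_function_sphere assms(2) by blast
  show "Moebius_function t w (Moebius_function (-t) (- cis t * w) u) = u"
    using Moebius_function_inverse assms by simp
qed

lemma cyclic_orient_Moebius_function:
  assumes w: "norm w < 1" and z: "norm z1 = 1" "norm z2 = 1" "norm z3 = 1"
  obtains c where "c > 0" "cyclic_orient (Moebius_function t w z1) (Moebius_function t w z2) (Moebius_function t w z3)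
    = c * cyclic_orient z1 z2 z3"
proof
  let ?M = "Moebius_function t w"
  define d1 where "d1 = 1 - cnj w * z1"
  define d2 where "d2 = 1 - cnj w * z2"
  define d3 where "d3 = 1 - cnj w * z3"
  have nz: "d1 \<noteq> 0" "d2 \<noteq> 0" "d3 \<noteq> 0" unfolding d1_def d2_def d3_def using Moebius_denom_nonzero w z by auto
  have cnj_M: "cnj (?M zi) = cnj (cis t) * cnj zi * di / cnj di"
    if "zi * cnj zi = 1" "di = 1 - cnj w * zi" for zi di
  proof -
    have "cnj zi * (1 - cnj w * zi) = cnj zi - cnj w * (zi * cnj zi)" by (simp add: algebra_simps)
    then have "cnj (zi - w) = cnj zi * di" using that by simp
    then show ?thesis unfolding Moebius_function_cis using that by (simp add: complex_cnj_divide)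
  qed
  have unit: "z1 * cnj z1 = 1" "z2 * cnj z2 = 1" "z3 * cnj z3 = 1"
    using z by (simp_all add: complex_norm_square[symmetric])
  have diff: "?M z - ?M z' = cis t * (1 - w * cnj w) * (z - z') / (d * d')"
    if "norm z = 1" "norm z' = 1" "d = 1 - cnj w * z" "d' = 1 - cnj w * z'" for z z' d d'
    using Moebius_function_diff[OF w] that by simp
  define c where "c = (1 - (norm w)^2)^3 / ((norm d1)^2 * (norm d2)^2 * (norm d3)^2)"
  show "c > 0" unfolding c_def using w nz by (simp add: abs_square_less_1 power_less_one_iff)
  have "(?M z1 - ?M z2) * (?M z2 - ?M z3) * (?M z3 - ?M z1) * cnj (?M z1) * cnj (?M z2) * cnj (?M z3)
     = (cis t * cnj (cis t))^3 * (1 - w * cnj w)^3 / ((d1 * cnj d1) * (d2 * cnj d2) * (d3 * cnj d3))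
       * ((z1 - z2) * (z2 - z3) * (z3 - z1) * cnj z1 * cnj z2 * cnj z3)"
    unfolding diff[OF z(1,2) d1_def d2_def] diff[OF z(2,3) d2_def d3_def] diff[OF z(3,1) d3_def d1_def]
      cnj_M[OF unit(1) d1_def] cnj_M[OF unit(2) d2_def] cnj_M[OF unit(3) d3_def]
    using nz by (simp add: field_simps power3_eq_cube)
  also have "\<dots> = of_real c * ((z1 - z2) * (z2 - z3) * (z3 - z1) * cnj z1 * cnj z2 * cnj z3)"
    unfolding c_def complex_norm_square[symmetric] of_real_diff of_real_1
    by (simp add: cis_cnj cis_mult)
  finally show "cyclic_orient (?M z1) (?M z2) (?M z3) = c * cyclic_orient z1 z2 z3"
    unfolding cyclic_orient_def by simp
qed

lemma Moebius_function_image_arc_of: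
  assumes w: "norm w < 1" and \<zeta>: "norm \<zeta> = 1" and \<theta>: "0 < \<theta>" "\<theta> < 2*pi"
  obtains \<theta>' where "0 < \<theta>'" "\<theta>' < 2*pi"
    "Moebius_function t w ` arc_of \<zeta> \<theta> = arc_of (Moebius_function t w \<zeta>) \<theta>'"
proof -
  let ?M = "Moebius_function t w"
  define \<eta> where "\<eta> = \<zeta> * cis \<theta>"
  have \<eta>: "norm \<eta> = 1" unfolding \<eta>_def using \<zeta> by (simp add: norm_mult)
  have M\<zeta>: "norm (?M \<zeta>) = 1" and M\<eta>: "norm (?M \<eta>) = 1" using norm_Moebius_function_sphere w \<zeta> \<eta> by auto
  obtain \<theta>' where \<theta>': "?M \<eta> = ?M \<zeta> * cis \<theta>'" "0 \<le> \<theta>'" "\<theta>' < 2*pi" using unit_eq_mult_cis[OF M\<eta> M\<zeta>] .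
  have "\<eta> \<noteq> \<zeta>" unfolding \<eta>_def using \<zeta> \<theta> inj_onD[OF inj_on_cis, of \<theta> 0] by auto
  then have "?M \<eta> \<noteq> ?M \<zeta>" using Moebius_function_inj_on_cball[OF w] \<zeta> \<eta> by force
  then have "\<theta>' \<noteq> 0" using \<theta>' by auto
  with \<theta>' have \<theta>'_pos: "0 < \<theta>'" by simp
  have orient: "cyclic_orient (?M \<zeta>) (?M z) (?M \<zeta> * cis \<theta>') \<le> 0 \<longleftrightarrow> cyclic_orient \<zeta> z \<eta> \<le> 0"
    if z: "norm z = 1" for z
  proof -
    obtain c where "c > 0" "cyclic_orient (?M \<zeta>) (?M z) (?M \<eta>) = c * cyclic_orient \<zeta> z \<eta>"
      using cyclic_orient_Moebius_function[OF w \<zeta> z \<eta>] .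
    then show ?thesis unfolding \<theta>'(1) by (simp add: mult_le_0_iff)
  qed
  have "?M ` arc_of \<zeta> \<theta> = arc_of (?M \<zeta>) \<theta>'"
  proof (intro set_eqI iffI)
    fix u assume "u \<in> ?M ` arc_of \<zeta> \<theta>"
    then obtain z where z: "norm z = 1" "cyclic_orient \<zeta> z \<eta> \<le> 0" "u = ?M z"
      using arc_of_eq_cyclic_orient_nonpos[OF \<zeta> \<theta>] \<eta>_def by auto
    then show "u \<in> arc_of (?M \<zeta>) \<theta>'"
      using orient norm_Moebius_function_sphere[OF w] arc_of_eq_cyclic_orient_nonpos[OF M\<zeta> \<theta>'_pos \<theta>'(3)] by auto
  next
    fix u assume "u \<in> arc_of (?M \<zeta>) \<theta>'"
    then have u: "norm u = 1" "cyclic_orient (?M \<zeta>) u (?M \<zeta> * cis \<theta>') \<le> 0"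
      using arc_of_eq_cyclic_orient_nonpos[OF M\<zeta> \<theta>'_pos \<theta>'(3)] by auto
    obtain z where z: "norm z = 1" "?M z = u" using Moebius_function_sphere_onto[OF w u(1)] .
    then have "z \<in> arc_of \<zeta> \<theta>" using orient u arc_of_eq_cyclic_orient_nonpos[OF \<zeta> \<theta>] \<eta>_def by auto
    then show "u \<in> ?M ` arc_of \<zeta> \<theta>" using z by blast
  qed
  then show ?thesis using that \<theta>'_pos \<theta>' by blast
qed

lemma arc_of_eq_imp_start_eq:
  assumes \<zeta>1: "norm \<zeta>1 = 1" and \<zeta>2: "norm \<zeta>2 = 1"
    and \<theta>1: "0 < \<theta>1" "\<theta>1 < 2*pi" and \<theta>2: "0 < \<theta>2" "\<theta>2 < 2*pi"
    and eq: "arc_of \<zeta>1 \<theta>1 = arc_of \<zeta>2 \<theta>2"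
  shows "\<zeta>1 = \<zeta>2"
proof -
  have nz: "\<zeta>1 \<noteq> 0" "\<zeta>2 \<noteq> 0" using \<zeta>1 \<zeta>2 by auto
  obtain s where s: "\<zeta>2 = \<zeta>1 * cis s" "0 \<le> s" "s < 2*pi" using unit_eq_mult_cis[OF \<zeta>2 \<zeta>1] .
  have "\<zeta>2 \<in> arc_of \<zeta>1 \<theta>1" using eq start_mem_arc_of by simp
  then have s_le: "s \<le> \<theta>1" using mult_cis_mem_arc_of_iff[OF nz(1) \<theta>1 s(2,3)] s(1) by simp
  have "s = 0"
  proof (rule ccontr)
    assume "s \<noteq> 0"
    with s have s_pos: "0 < s" by simp
    \<comment> \<open>seen from \<open>\<zeta>1\<close>, the second arc then covers all angles in \<open>[s, 2\<pi>)\<close>, beyond \<open>\<theta>1\<close>\<close>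
    have "\<zeta>2 * cis (2*pi - s) = \<zeta>1" using s(1) by (simp add: mult.assoc cis_mult)
    then have "\<zeta>2 * cis (2*pi - s) \<in> arc_of \<zeta>2 \<theta>2" using eq start_mem_arc_of by metis
    then have le2: "2*pi - s \<le> \<theta>2" using mult_cis_mem_arc_of_iff[OF nz(2) \<theta>2, of "2*pi - s"] s_pos s by simp
    define e where "e = (2*pi - \<theta>1) / 2"
    have e: "0 < e" "e < 2*pi - s" using \<theta>1 s_le unfolding e_def by auto
    have "\<zeta>1 * cis (2*pi - e) = \<zeta>2 * cis (2*pi - s - e)" using s(1) by (simp add: mult.assoc cis_mult)
    moreover have "\<zeta>2 * cis (2*pi - s - e) \<in> arc_of \<zeta>2 \<theta>2"
      using mult_cis_mem_arc_of_iff[OF nz(2) \<theta>2, of "2*pi - s - e"] e le2 s_pos by simp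
    ultimately have "\<zeta>1 * cis (2*pi - e) \<in> arc_of \<zeta>1 \<theta>1" using eq by simp
    then have "2*pi - e \<le> \<theta>1" using mult_cis_mem_arc_of_iff[OF nz(1) \<theta>1, of "2*pi - e"] e \<theta>1 by (simp add: e_def)
    then show False using \<theta>1 unfolding e_def by (simp add: field_simps)
  qed
  then show ?thesis using s by simp
qed

lemma arc_of_eq_iff:
  assumes "norm \<zeta>1 = 1" "norm \<zeta>2 = 1" "0 < \<theta>1" "\<theta>1 < 2*pi" "0 < \<theta>2" "\<theta>2 < 2*pi"
  shows "arc_of \<zeta>1 \<theta>1 = arc_of \<zeta>2 \<theta>2 \<longleftrightarrow> \<zeta>1 = \<zeta>2 \<and> \<theta>1 = \<theta>2"
proof
  assume eq: "arc_of \<zeta>1 \<theta>1 = arc_of \<zeta>2 \<theta>2"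
  then have \<zeta>: "\<zeta>1 = \<zeta>2" using arc_of_eq_imp_start_eq assms by blast
  have "\<zeta>1 \<noteq> 0" using assms by auto
  then have "\<zeta>1 * cis \<theta> \<in> arc_of \<zeta>1 \<theta>' \<longleftrightarrow> \<theta> \<le> \<theta>'"
    if "\<theta> \<in> {\<theta>1, \<theta>2}" "\<theta>' \<in> {\<theta>1, \<theta>2}" for \<theta> \<theta>'
    using mult_cis_mem_arc_of_iff that assms by auto
  then have "\<theta>1 \<le> \<theta>2" "\<theta>2 \<le> \<theta>1" using eq unfolding \<zeta> by (metis insertI1 insertI2 order_refl singletonI)+
  with \<zeta> show "\<zeta>1 = \<zeta>2 \<and> \<theta>1 = \<theta>2" by simp
qed simp

lemma arc_act_disc_aut:
  assumes g: "disc_aut g" and \<zeta>: "norm \<zeta> = 1" and \<theta>: "0 < \<theta>" "\<theta> < 2*pi"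
  obtains \<theta>' where "arc_act g (\<zeta>, \<theta>) = (g \<zeta>, \<theta>')" "0 < \<theta>'" "\<theta>' < 2*pi" "arc_of (g \<zeta>) \<theta>' = g ` arc_of \<zeta> \<theta>"
proof -
  obtain w t where w: "norm w < 1" and g_eq: "g = Moebius_function t w" using g disc_aut_iff_Moebius by blast
  obtain \<theta>' where \<theta>': "0 < \<theta>'" "\<theta>' < 2*pi" and im: "g ` arc_of \<zeta> \<theta> = arc_of (g \<zeta>) \<theta>'"
    using Moebius_function_image_arc_of[OF w \<zeta> \<theta>] unfolding g_eq by blast
  have g\<zeta>: "norm (g \<zeta>) = 1" unfolding g_eq using norm_Moebius_function_sphere[OF w \<zeta>] .
  let ?P = "\<lambda>q. q \<in> sphere 0 1 \<times> {0<..<2*pi} \<and> arc_of (fst q) (snd q) = g ` arc_of \<zeta> \<theta>"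
  have "?P (g \<zeta>, \<theta>')" using \<theta>' im g\<zeta> by simp
  moreover have "q = (g \<zeta>, \<theta>')" if "?P q" for q
    using that \<theta>' g\<zeta> arc_of_eq_iff[of "fst q" "g \<zeta>" "snd q" \<theta>'] unfolding im by (cases q) auto
  ultimately have "(THE q. ?P q) = (g \<zeta>, \<theta>')" by (rule the_equality)
  then have "arc_act g (\<zeta>, \<theta>) = (g \<zeta>, \<theta>')" unfolding arc_act_def using \<theta> by auto
  then show ?thesis using that \<theta>' im by blast
qed

lemma arc_act_mem_X0:
  assumes "disc_aut g" "x \<in> X0"
  shows "arc_act g x \<in> X0"
proof -
  obtain \<zeta> \<theta> where x: "x = (\<zeta>, \<theta>)" "norm \<zeta> = 1" "0 \<le> \<theta>" "\<theta> \<le> 2*pi" using assms(2) unfolding X0_def by auto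
  show ?thesis
  proof (cases "\<theta> = 0 \<or> \<theta> = 2*pi")
    case True
    then show ?thesis using disc_aut_sphere[OF assms(1) x(2)] x unfolding X0_def arc_act_def by auto
  next
    case False
    then obtain \<theta>' where "arc_act g x = (g \<zeta>, \<theta>')" "0 < \<theta>'" "\<theta>' < 2*pi"
      using arc_act_disc_aut[OF assms(1) x(2), of \<theta>] x by force
    then show ?thesis using disc_aut_sphere[OF assms(1) x(2)] unfolding X0_def by auto
  qed
qed

lemma compact_X0: "compact X0"
  unfolding X0_def by (intro compact_Times) auto

lemma Moebius_zero_estimates:
  assumes w: "norm w < 1" and z: "norm z < 1" and r: "r < 1"
    and Mz: "norm (Moebius_function t w z) \<le> r"
  shows "norm (z - w) \<le> r * (1 - (norm z)^2) / (1 - r)"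
    and "1 - (norm w)^2 \<le> (1 - (norm z)^2) / (1 - r)^2"
proof -
  define \<delta> where "\<delta> = 1 - (norm z)^2"
  define D where "D = norm (1 - cnj w * z)"
  have \<delta>: "\<delta> > 0" unfolding \<delta>_def using z by (simp add: power_less_one_iff abs_square_less_1)
  have "1 - cnj w * z \<noteq> 0" using Moebius_denom_nonzero w z by simp
  then have zw: "norm (z - w) \<le> r * D"
    using Mz by (simp add: D_def Moebius_function_cis norm_mult norm_divide divide_le_eq)
  have "1 - w * cnj z = of_real \<delta> + cnj z * (z - w)"
    unfolding \<delta>_def by (simp add: algebra_simps flip: complex_norm_square)
  then have "norm (1 - w * cnj z) \<le> \<delta> + norm z * norm (z - w)"
    using norm_triangle_ineq[of "of_real \<delta>" "cnj z * (z - w)"] \<delta> by (simp add: norm_mult)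
  moreover have "norm (1 - w * cnj z) = D"
    unfolding D_def by (metis complex_cnj_cnj complex_cnj_diff complex_cnj_mult complex_cnj_one complex_mod_cnj)
  moreover have "norm z * norm (z - w) \<le> norm (z - w)" using z by (simp add: mult_left_le_one_le)
  ultimately have "D \<le> \<delta> / (1 - r)" using zw r by (simp add: field_simps)
  then show "norm (z - w) \<le> r * \<delta> / (1 - r)"
    using zw order_trans[OF norm_ge_zero Mz] by (metis mult_left_mono order_trans times_divide_eq_right)
  have "(1 - (norm w)^2) * \<delta> \<le> D^2"
    using norm_Moebius_denom_squared[of w z] zero_le_power2[of "norm (z - w)"] unfolding D_def \<delta>_def
    by linarith
  also have "\<dots> \<le> (\<delta> / (1 - r))^2" using \<open>D \<le> \<delta> / (1 - r)\<close> by (simp add: D_def power_mono)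
  also have "\<dots> = (\<delta> / (1 - r)^2) * \<delta>" by (simp add: power2_eq_square)
  finally show "1 - (norm w)^2 \<le> \<delta> / (1 - r)^2" by (rule mult_right_le_imp_le[OF _ \<delta>])
qed

lemma norm_Moebius_diff_sphere:
  assumes w: "norm w < 1" and "norm u = 1" "norm v = 1"
  shows "norm (Moebius_function t w u - Moebius_function t w v)
    = (1 - (norm w)^2) * norm (u - v) / (norm (u - w) * norm (v - w))"
proof -
  have "1 - w * cnj w = of_real (1 - (norm w)^2)" by (simp flip: complex_norm_square)
  moreover have "1 - (norm w)^2 \<ge> 0" using w by (simp add: abs_square_le_1 less_imp_le)
  ultimately have "norm (1 - w * cnj w) = 1 - (norm w)^2" by (metis norm_of_real abs_of_nonneg)
  then show ?thesis
    using Moebius_function_diff[OF w, of u v t] norm_Moebius_denom_sphere[of u w] norm_Moebius_denom_sphere[of v w] assms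
    by (simp add: norm_mult norm_divide)
qed

text \<open>An automorphism mapping a point \<open>z\<close> near the circle into a fixed compact disc has its zero
  \<open>w\<close> close to \<open>z\<close> and \<open>1 - |w|\<^sup>2\<close> small (\<open>Moebius_zero_estimates\<close>), so it crushes the part
  of the circle away from \<open>z\<close>.\<close>
lemma norm_Moebius_diff_le_far_from:
  assumes w: "norm w < 1" and z: "norm z < 1" and r: "r < 1"
    and Mz: "norm (Moebius_function t w z) \<le> r"
    and c: "0 < c" "r * (1 - (norm z)^2) / (1 - r) \<le> c/2"
    and u: "norm u = 1" "c \<le> norm (u - z)" and v: "norm v = 1" "c \<le> norm (v - z)"
  shows "norm (Moebius_function t w u - Moebius_function t w v) \<le> 8 * (1 - (norm z)^2) / ((1 - r)^2 * c^2)"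
proof -
  have "norm (z - w) \<le> c/2" using Moebius_zero_estimates(1)[OF w z r Mz] c(2) by linarith
  then have far: "c/2 \<le> norm (y - w)" if "c \<le> norm (y - z)" for y
    using that norm_triangle_ineq[of "y - w" "w - z"] by (simp add: norm_minus_commute)
  have "norm (u - v) \<le> 2" using u v norm_triangle_ineq4[of u v] by simp
  have nonneg: "0 \<le> (1 - (norm z)^2) / (1 - r)^2" using z by (simp add: abs_square_le_1 less_imp_le)
  have "norm (Moebius_function t w u - Moebius_function t w v)
      = (1 - (norm w)^2) * norm (u - v) / (norm (u - w) * norm (v - w))"
    using norm_Moebius_diff_sphere[OF w u(1) v(1)] .
  also have "\<dots> \<le> ((1 - (norm z)^2) / (1 - r)^2) * 2 / ((c/2) * (c/2))"
  proof (rule frac_le)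
    show "0 \<le> ((1 - (norm z)^2) / (1 - r)^2) * 2" using nonneg by (rule mult_nonneg_nonneg) simp
    show "(1 - (norm w)^2) * norm (u - v) \<le> ((1 - (norm z)^2) / (1 - r)^2) * 2"
      using Moebius_zero_estimates(2)[OF w z r Mz] \<open>norm (u - v) \<le> 2\<close> nonneg
      by (intro mult_mono) auto
    show "0 < (c/2) * (c/2)" using c by simp
    show "(c/2) * (c/2) \<le> norm (u - w) * norm (v - w)"
      using far u v c by (intro mult_mono) auto
  qed
  also have "\<dots> = 8 * (1 - (norm z)^2) / ((1 - r)^2 * c^2)" by (simp add: field_simps power2_eq_square)
  finally show ?thesis .
qed

lemma one_minus_norm_squared_le:
  fixes z p :: complex
  assumes "norm p = 1" "norm z \<le> 1"
  shows "1 - (norm z)^2 \<le> 2 * norm (z - p)"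
proof -
  have "1 - (norm z)^2 = (1 - norm z) * (1 + norm z)" by (simp add: power2_eq_square algebra_simps)
  also have "\<dots> \<le> (1 - norm z) * 2" using assms(2) by (intro mult_left_mono) auto
  also have "1 - norm z \<le> norm (z - p)" using assms(1) norm_triangle_ineq2[of p z] by (simp add: norm_minus_commute)
  then have "(1 - norm z) * 2 \<le> 2 * norm (z - p)" by simp
  finally show ?thesis .
qed

lemma disc_aut_contracts_far_from:
  assumes r: "r < 1" and c: "0 < c" and \<sigma>: "0 < \<sigma>"
  obtains \<eta> where "\<eta> > 0"
    "\<And>g z p u v. disc_aut g \<Longrightarrow> norm z < 1 \<Longrightarrow> norm (g z) \<le> r \<Longrightarrow> norm p = 1 \<Longrightarrow> norm (z - p) < \<eta>
       \<Longrightarrow> norm u = 1 \<Longrightarrow> norm v = 1 \<Longrightarrow> c \<le> norm (u - p) \<Longrightarrow> c \<le> norm (v - p)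
       \<Longrightarrow> norm (g u - g v) < \<sigma>"
proof
  define r' where "r' = max 0 r"
  have r': "0 \<le> r'" "r' < 1" "r \<le> r'" unfolding r'_def using r by auto
  define X where "X = \<sigma> * (1 - r')^2 * c^2"
  define \<eta> where "\<eta> = min (c/2) (min (c * (1 - r') / (8 * (r' + 1))) (X / 128))"
  have \<eta>: "\<eta> \<le> c/2" "\<eta> \<le> c * (1 - r') / (8 * (r' + 1))" "\<eta> \<le> X / 128"
    unfolding \<eta>_def by (rule min.cobounded1, rule min.coboundedI2[OF min.cobounded1],
        rule min.coboundedI2[OF min.cobounded2])
  show "\<eta> > 0" unfolding \<eta>_def X_def using c \<sigma> r' by auto
  fix g z p u v
  assume g: "disc_aut g" and z: "norm z < 1" "norm (g z) \<le> r" and p: "norm p = 1" "norm (z - p) < \<eta>"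
    and u: "norm u = 1" "c \<le> norm (u - p)" and v: "norm v = 1" "c \<le> norm (v - p)"
  obtain w t where w: "norm w < 1" and g_eq: "g = Moebius_function t w" using g disc_aut_iff_Moebius by blast
  have Mz: "norm (Moebius_function t w z) \<le> r'" using z(2) r' unfolding g_eq by simp
  define \<delta> where "\<delta> = 1 - (norm z)^2"
  have \<delta>: "0 \<le> \<delta>" "\<delta> < 2 * \<eta>"
    using z(1) one_minus_norm_squared_le[OF p(1), of z] p(2) unfolding \<delta>_def
    by (simp_all add: abs_square_le_1 less_imp_le)
  have far: "c/2 \<le> norm (y - z)" if "c \<le> norm (y - p)" for y
    using that p(2) \<eta>(1) norm_triangle_ineq[of "y - z" "z - p"] by simp
  have "r' * \<delta> / (1 - r') \<le> r' * (2 * \<eta>) / (1 - r')"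
    using \<delta> r' by (intro divide_right_mono mult_left_mono) auto
  also have "\<dots> \<le> (c/2) / 2"
  proof -
    have "\<eta> * (8 * (r' + 1)) \<le> c * (1 - r')" using \<eta>(2) r' by (simp add: le_divide_eq)
    moreover have "r' * (2 * \<eta>) * 4 \<le> \<eta> * (8 * (r' + 1))" using \<open>\<eta> > 0\<close> by (simp add: algebra_simps)
    ultimately have "r' * (2 * \<eta>) * 4 \<le> c * (1 - r')" by linarith
    then show ?thesis using r' by (simp add: divide_le_eq field_simps)
  qed
  finally have "norm (g u - g v) \<le> 8 * \<delta> / ((1 - r')^2 * (c/2)^2)"
    using norm_Moebius_diff_le_far_from[OF w z(1) r'(2) Mz _ _ u(1) far[OF u(2)] v(1) far[OF v(2)]] c
    unfolding g_eq \<delta>_def by simp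
  also have "\<dots> < \<sigma>"
  proof -
    define D where "D = (1 - r')^2 * (c/2)^2"
    have D: "0 < D" unfolding D_def using r' c by simp
    then have "0 < \<sigma> * D" using \<sigma> by simp
    moreover have "\<sigma> * D / 2 = X / 8" unfolding D_def X_def by (simp add: power2_eq_square)
    ultimately have "8 * \<delta> < \<sigma> * D" using \<delta> \<eta>(3) by linarith
    then show ?thesis unfolding D_def[symmetric] using D by (simp add: divide_less_eq mult.commute)
  qed
  finally show "norm (g u - g v) < \<sigma>" .
qed

section \<open>Holomorphic functions on the disc\<close>

lemma holomorphic_constant_on_if_values_on_compact:
  assumes f: "f holomorphic_on S" and S: "open S" "connected S"
    and K: "compact K" "K \<subseteq> S" and attained: "\<And>z. z \<in> S \<Longrightarrow> \<exists>k\<in>K. f z = f k"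
  shows "f constant_on S"
proof (cases "K = {}")
  case True
  then show ?thesis using attained by (auto simp: constant_on_def)
next
  case False
  have "continuous_on K (\<lambda>z. norm (f z))"
    using continuous_on_subset[OF holomorphic_on_imp_continuous_on[OF f] K(2)] by (rule continuous_on_norm)
  then obtain k0 where k0: "k0 \<in> K" "\<And>k. k \<in> K \<Longrightarrow> norm (f k) \<le> norm (f k0)"
    using continuous_attains_sup[OF K(1) False] by blast
  have "k0 \<in> S" using k0(1) K(2) by auto
  moreover have "norm (f z) \<le> norm (f k0)" if "z \<in> S" for z
    using attained[OF that] k0(2) by auto
  ultimately show ?thesis by (rule maximum_modulus_principle[OF f S S(1) subset_refl])
qed

lemma holomorphic_mult_eq_0_imp:
  assumes f: "f holomorphic_on S" and g: "g holomorphic_on S" and S: "open S" "connected S"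
    and fg: "\<And>z. z \<in> S \<Longrightarrow> f z * g z = 0"
  shows "(\<forall>z\<in>S. f z = 0) \<or> (\<forall>z\<in>S. g z = 0)"
proof (rule disjCI)
  assume "\<not> (\<forall>z\<in>S. g z = 0)"
  then obtain y where y: "y \<in> S" "g y \<noteq> 0" by auto
  have "isCont g y" using holomorphic_on_imp_continuous_on[OF g] S y continuous_on_eq_continuous_at by blast
  then obtain e where e: "e > 0" "\<forall>x. dist y x < e \<longrightarrow> g x \<noteq> 0" using continuous_at_avoid y(2) by blast
  have f0: "f x = 0" if "x \<in> ball y e \<inter> S" for x
  proof -
    have "g x \<noteq> 0" using that e(2) by simp
    then show ?thesis using fg[of x] that by auto
  qed
  have "y \<in> ball y e \<inter> S" using \<open>e > 0\<close> y by simp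
  then have "ball y e \<inter> S \<noteq> {}" by blast
  then show "\<forall>z\<in>S. f z = 0"
    using analytic_continuation_open[of "ball y e \<inter> S" S f "\<lambda>_. 0"] S f f0 by (auto simp: open_Int)
qed

lemma holomorphic_prod_eq_0_imp:
  fixes N :: nat
  assumes "\<And>j. j < N \<Longrightarrow> f j holomorphic_on S" and S: "open S" "connected S" "S \<noteq> {}"
    and "\<And>z. z \<in> S \<Longrightarrow> (\<Prod>j<N. f j z) = 0"
  shows "\<exists>j<N. \<forall>z\<in>S. f j z = 0"
  using assms(1,5)
proof (induction N)
  case 0
  then show ?case using S(3) by auto
next
  case (Suc N)
  have "(\<lambda>z. \<Prod>j<N. f j z) holomorphic_on S" using Suc.prems(1) by (intro holomorphic_on_prod) auto
  then have "(\<forall>z\<in>S. (\<Prod>j<N. f j z) = 0) \<or> (\<forall>z\<in>S. f N z = 0)"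
    by (rule holomorphic_mult_eq_0_imp[OF _ _ S(1,2)]) (use Suc.prems in auto)
  then show ?case
  proof
    assume "\<forall>z\<in>S. (\<Prod>j<N. f j z) = 0"
    then obtain j where "j < N" "\<forall>z\<in>S. f j z = 0" using Suc.IH Suc.prems(1) by auto
    then show ?case by (intro exI[of _ j]) auto
  qed auto
qed

lemma holomorphic_eq_0_if_tendsto_0_at_sphere:
  assumes f: "f holomorphic_on ball 0 1"
    and small: "\<And>\<epsilon>. \<epsilon> > 0 \<Longrightarrow> \<exists>r<1. \<forall>y. r < norm y \<longrightarrow> norm y < 1 \<longrightarrow> norm (f y) \<le> \<epsilon>"
    and z: "z \<in> ball 0 1"
  shows "f z = 0"
proof (rule ccontr)
  assume "f z \<noteq> 0"
  then obtain r where r: "r < 1" "\<And>y. r < norm y \<Longrightarrow> norm y < 1 \<Longrightarrow> norm (f y) \<le> norm (f z) / 2"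
    using small[of "norm (f z) / 2"] by auto
  define \<rho> where "\<rho> = (max r (norm z) + 1) / 2"
  have \<rho>: "r < \<rho>" "norm z < \<rho>" "\<rho> < 1" unfolding \<rho>_def using r z by auto
  have "0 < \<rho>" using \<rho>(2) norm_ge_zero[of z] by linarith
  have "norm (f z) \<le> norm (f z) / 2"
  proof (rule maximum_modulus_frontier[of f "ball 0 \<rho>"])
    have sub: "cball 0 \<rho> \<subseteq> ball 0 1" using \<rho> by auto
    then have "ball 0 \<rho> \<subseteq> ball 0 1" by auto
    then show "f holomorphic_on interior (ball 0 \<rho>)" using holomorphic_on_subset[OF f] by simp
    show "continuous_on (closure (ball 0 \<rho>)) f"
      using continuous_on_subset[OF holomorphic_on_imp_continuous_on[OF f] sub] \<open>0 < \<rho>\<close> by simp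
    show "\<And>y. y \<in> frontier (ball 0 \<rho>) \<Longrightarrow> norm (f y) \<le> norm (f z) / 2"
      using r \<rho> \<open>0 < \<rho>\<close> by (simp add: frontier_ball)
  qed (use \<rho> in auto)
  then show False using \<open>f z \<noteq> 0\<close> by simp
qed

lemma norm_cis_minus_1_le: "norm (cis x - 1) \<le> \<bar>x\<bar>"
proof -
  have "(norm (cis x - 1))^2 = (cos x - 1)^2 + (sin x)^2" by (simp add: cmod_power2)
  also have "\<dots> = 2 - 2 * cos x" using sin_cos_squared_add[of x] by (simp add: power2_eq_square algebra_simps)
  also have "\<dots> = 4 * (sin (x/2))^2" using cos_double_sin[of "x/2"] by simp
  also have "\<dots> \<le> x^2"
  proof -
    have "2 * \<bar>sin (x/2)\<bar> \<le> \<bar>x\<bar>" using abs_sin_x_le_abs_x[of "x/2"] by simp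
    then have "(2 * \<bar>sin (x/2)\<bar>)^2 \<le> \<bar>x\<bar>^2" by (rule power_mono) simp
    then show ?thesis by (simp add: power_mult_distrib)
  qed
  finally have "(norm (cis x - 1))^2 \<le> \<bar>x\<bar>^2" by simp
  then show ?thesis by (rule power2_le_imp_le) simp
qed

lemma exists_rotation_near:
  fixes N :: nat
  assumes m: "norm m = 1" and p: "norm p = 1" and N: "N > 0"
  obtains j where "j < N" "norm (cis (- 2*pi / N) ^ j * p - m) \<le> 2*pi / N"
proof -
  obtain \<sigma> where \<sigma>: "p = m * cis \<sigma>" "0 \<le> \<sigma>" "\<sigma> < 2*pi" using unit_eq_mult_cis[OF p m] .
  define j where "j = nat \<lfloor>\<sigma> * N / (2*pi)\<rfloor>"
  have "real j = \<lfloor>\<sigma> * N / (2*pi)\<rfloor>" unfolding j_def using \<sigma> by simp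
  then have j: "real j \<le> \<sigma> * N / (2*pi)" "\<sigma> * N / (2*pi) < real j + 1" by linarith+
  define y where "y = \<sigma> - 2*pi*j/N"
  have N_pos: "real N > 0" using N by simp
  have "y * N = \<sigma> * N - 2*pi*j" unfolding y_def using N_pos by (simp add: field_simps)
  moreover have "2*pi*j \<le> \<sigma> * N" "\<sigma> * N < 2*pi*(j + 1)"
    using j by (simp_all add: le_divide_eq divide_less_eq algebra_simps)
  ultimately have "0 \<le> y * N" "y * N \<le> 2*pi" by (simp_all add: algebra_simps)
  then have y: "0 \<le> y" "y \<le> 2*pi/N" using N_pos by (simp_all add: zero_le_mult_iff le_divide_eq)
  have "\<sigma> * N / (2*pi) < N" using \<sigma> N by (simp add: divide_less_eq)
  then have "j < N" using j by linarith
  have "cis (- 2*pi / N) ^ j * p = m * (cis \<sigma> * cis (real j * (- 2*pi / N)))"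
    unfolding Complex.DeMoivre \<sigma>(1) by (simp add: ac_simps)
  also have "\<dots> = m * cis y" unfolding cis_mult y_def by (simp add: field_simps)
  finally have "cis (- 2*pi / N) ^ j * p = m * cis y" .
  moreover have "m * cis y - m = m * (cis y - 1)" by (simp add: algebra_simps)
  ultimately have "norm (cis (- 2*pi / N) ^ j * p - m) = norm (cis y - 1)"
    using m by (simp add: norm_mult)
  also have "\<dots> \<le> 2*pi / N" using norm_cis_minus_1_le[of y] y by simp
  finally show ?thesis using that \<open>j < N\<close> by blast
qed

lemma norm_prod_le_small_factor:
  fixes f :: "nat \<Rightarrow> 'a::{real_normed_field}"
  assumes B: "\<And>i. i < N \<Longrightarrow> norm (f i) \<le> B" and j: "j < N" "norm (f j) \<le> \<epsilon>"
  shows "norm (\<Prod>i<N. f i) \<le> \<epsilon> * B ^ (N - 1)"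
proof -
  have "norm (\<Prod>i<N. f i) = norm (f j) * (\<Prod>i\<in>{..<N} - {j}. norm (f i))"
    using j by (simp add: prod.remove norm_mult prod_norm)
  also have "\<dots> \<le> \<epsilon> * (\<Prod>i\<in>{..<N} - {j}. B)"
    using j B order_trans[OF norm_ge_zero j(2)] by (intro mult_mono prod_mono) (auto simp: prod_nonneg)
  also have "(\<Prod>i\<in>{..<N} - {j}. B) = B ^ (N - 1)" using j by simp
  finally show ?thesis .
qed

lemma norm_prod_rotations_le:
  fixes \<phi> :: "complex \<Rightarrow> complex" and N :: nat
  assumes B: "\<And>y. y \<in> ball 0 1 \<Longrightarrow> norm (\<phi> y) \<le> B"
    and m: "norm m = 1" and N: "N > 0" "2*pi / N \<le> c"
    and small: "\<And>z p. z \<in> ball 0 1 \<Longrightarrow> norm p = 1 \<Longrightarrow> norm (p - m) \<le> c \<Longrightarrow> norm (z - p) < \<eta>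
                  \<Longrightarrow> norm (\<phi> z) \<le> \<delta>"
    and u: "u \<noteq> 0" "1 - \<eta> < norm u" "norm u < 1"
  shows "norm (\<Prod>j<N. \<phi> (cis (- 2*pi / N) ^ j * u)) \<le> \<delta> * B ^ (N - 1)"
proof -
  define \<omega> where "\<omega> = cis (- 2*pi / N)"
  have norm_\<omega>: "norm (\<omega> ^ j) = 1" for j unfolding \<omega>_def by (simp add: norm_power)
  define p where "p = u / norm u"
  have p: "norm p = 1" unfolding p_def using u(1) by (simp add: norm_divide)
  have "u - p = of_real (norm u - 1) * p" unfolding p_def using u(1) by (simp add: field_simps)
  then have "norm (u - p) = \<bar>norm u - 1\<bar>" using p by (simp only: norm_mult norm_of_real) simp
  then have "norm (u - p) < \<eta>" using u by auto
  obtain j where j: "j < N" "norm (\<omega> ^ j * p - m) \<le> 2*pi / N"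
    unfolding \<omega>_def by (rule exists_rotation_near[OF m p N(1)])
  have "norm (\<omega> ^ j * u - \<omega> ^ j * p) < \<eta>"
    using \<open>norm (u - p) < \<eta>\<close> by (simp add: norm_mult norm_\<omega> flip: right_diff_distrib)
  moreover have "\<omega> ^ j * u \<in> ball 0 1" "norm (\<omega> ^ j * p) = 1"
    using u(3) p by (simp_all add: norm_mult norm_\<omega>)
  moreover have "norm (\<omega> ^ j * p - m) \<le> c" using j(2) N(2) by linarith
  ultimately have small_j: "norm (\<phi> (\<omega> ^ j * u)) \<le> \<delta>" using small by blast
  have bound: "norm (\<phi> (\<omega> ^ i * u)) \<le> B" if "i < N" for i
    using B u(3) by (simp add: norm_mult norm_\<omega>)
  show ?thesis unfolding \<omega>_def[symmetric]
    by (rule norm_prod_le_small_factor[of N "\<lambda>i. \<phi> (\<omega> ^ i * u)", OF bound j(1) small_j])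
qed

text \<open>A bounded holomorphic function on the disc tending to zero uniformly along an arc of the
  circle vanishes: the product of its finitely many rotates, by angles smaller than the arc,
  tends to zero along the whole circle.\<close>
lemma holomorphic_eq_0_if_tendsto_0_at_arc:
  fixes \<phi> :: "complex \<Rightarrow> complex"
  assumes hol: "\<phi> holomorphic_on ball 0 1" and bdd: "bounded (\<phi> ` ball 0 1)"
    and m: "norm m = 1" and c: "0 < c"
    and small: "\<And>\<epsilon>. \<epsilon> > 0 \<Longrightarrow> \<exists>\<eta>>0. \<forall>z\<in>ball 0 1. \<forall>p. norm p = 1 \<longrightarrow> norm (p - m) \<le> c
                  \<longrightarrow> norm (z - p) < \<eta> \<longrightarrow> norm (\<phi> z) < \<epsilon>"
    and z: "z \<in> ball 0 1"
  shows "\<phi> z = 0"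
proof -
  obtain B where B: "B > 0" "\<And>y. y \<in> ball 0 1 \<Longrightarrow> norm (\<phi> y) \<le> B" using bdd by (auto simp: bounded_pos)
  define N where "N = nat \<lceil>2*pi / c\<rceil> + 1"
  have N_pos: "N > 0" unfolding N_def by simp
  have "2*pi / c \<le> real N" unfolding N_def by linarith
  then have "2*pi \<le> c * N" using c by (simp add: divide_le_eq mult.commute)
  then have N: "N > 0" "2*pi / N \<le> c" using N_pos by (simp_all add: divide_le_eq mult.commute)
  define \<omega> where "\<omega> = cis (- 2*pi / N)"
  have norm_\<omega>: "norm (\<omega> ^ j) = 1" for j unfolding \<omega>_def by (simp add: norm_power)
  have rotate_hol: "(\<lambda>y. \<phi> (\<omega> ^ j * y)) holomorphic_on ball 0 1" for j
  proof -
    have "(\<phi> \<circ> (\<lambda>y. \<omega> ^ j * y)) holomorphic_on ball 0 1"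
      by (rule holomorphic_on_compose_gen[OF _ hol]) (auto simp: norm_mult norm_\<omega>)
    then show ?thesis by (simp add: o_def)
  qed
  have "(\<Prod>j<N. \<phi> (\<omega> ^ j * y)) = 0" if y: "y \<in> ball 0 1" for y
  proof (rule holomorphic_eq_0_if_tendsto_0_at_sphere[OF _ _ y])
    show "(\<lambda>y. \<Prod>j<N. \<phi> (\<omega> ^ j * y)) holomorphic_on ball 0 1" by (intro holomorphic_on_prod rotate_hol)
    fix \<epsilon> :: real assume "\<epsilon> > 0"
    then obtain \<eta> where \<eta>: "\<eta> > 0" "\<forall>z\<in>ball 0 1. \<forall>p. norm p = 1 \<longrightarrow> norm (p - m) \<le> c
                  \<longrightarrow> norm (z - p) < \<eta> \<longrightarrow> norm (\<phi> z) < \<epsilon> / B ^ (N - 1)"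
      using small[of "\<epsilon> / B ^ (N - 1)"] B by auto
    have "norm (\<Prod>j<N. \<phi> (\<omega> ^ j * u)) \<le> \<epsilon>" if u: "max 0 (1 - \<eta>) < norm u" "norm u < 1" for u
    proof -
      have "norm (\<Prod>j<N. \<phi> (\<omega> ^ j * u)) \<le> \<epsilon> / B ^ (N - 1) * B ^ (N - 1)"
        unfolding \<omega>_def using \<eta>(2) u
        by (intro norm_prod_rotations_le[OF B(2) m N]) (auto simp: less_imp_le)
      then show ?thesis using B by simp
    qed
    then show "\<exists>r<1. \<forall>u. r < norm u \<longrightarrow> norm u < 1 \<longrightarrow> norm (\<Prod>j<N. \<phi> (\<omega> ^ j * u)) \<le> \<epsilon>"
      using \<eta> by (intro exI[of _ "max 0 (1 - \<eta>)"]) auto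
  qed
  then have "\<exists>j<N. \<forall>y\<in>ball 0 1. \<phi> (\<omega> ^ j * y) = 0"
    by (intro holomorphic_prod_eq_0_imp[OF rotate_hol]) auto
  then obtain j where j: "\<And>y. y \<in> ball 0 1 \<Longrightarrow> \<phi> (\<omega> ^ j * y) = 0" by blast
  have "cnj \<omega> ^ j * z \<in> ball 0 1" using z norm_\<omega>[of j] by (simp add: norm_mult norm_power)
  note j[OF this]
  moreover have "\<omega> * cnj \<omega> = 1" unfolding \<omega>_def by (simp add: cis_cnj cis_mult)
  then have "\<omega> ^ j * (cnj \<omega> ^ j * z) = z" by (simp flip: mult.assoc power_mult_distrib)
  ultimately show ?thesis by simp
qed

section \<open>Invariant leafwise holomorphic functions\<close>

text \<open>\<open>F\<close> is a function on \<open>\<bbbD> \<times> X\<^sub>0\<close> that descends to \<open>\<bbbD> \<times> X\<^sub>1\<close> (\<open>pole_const\<close>: it is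
  constant on the circles \<open>t = 0\<close> and \<open>t = 2\<pi>\<close>) and to \<open>M\<close> (\<open>invariant\<close>); \<open>K\<close> is a compact set
  meeting every \<open>\<Gamma>\<close>-orbit.\<close>
locale leafwise_holomorphic_invariant =
  fixes \<Gamma> :: "(complex \<Rightarrow> complex) set" and K :: "complex set"
    and F :: "complex \<times> (complex \<times> real) \<Rightarrow> complex"
  assumes disc_aut: "g \<in> \<Gamma> \<Longrightarrow> disc_aut g"
    and compact_K: "compact K" and K_subset: "K \<subseteq> ball 0 1"
    and orbit_meets_K: "z \<in> ball 0 1 \<Longrightarrow> \<exists>g\<in>\<Gamma>. g z \<in> K"
    and continuous: "continuous_on (ball 0 1 \<times> X0) F"
    and pole_const: "z \<in> ball 0 1 \<Longrightarrow> norm \<zeta> = 1 \<Longrightarrow> norm \<zeta>' = 1 \<Longrightarrow> t = 0 \<or> t = 2*pi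
      \<Longrightarrow> F (z, (\<zeta>, t)) = F (z, (\<zeta>', t))"
    and invariant: "g \<in> \<Gamma> \<Longrightarrow> z \<in> ball 0 1 \<Longrightarrow> x \<in> X0 \<Longrightarrow> F (g z, arc_act g x) = F (z, x)"
    and holomorphic: "x \<in> X0 \<Longrightarrow> (\<lambda>z. F (z, x)) holomorphic_on ball 0 1"
begin

lemma continuous_on_K_X0: "continuous_on (K \<times> X0) F"
  by (rule continuous_on_subset[OF continuous]) (use K_subset in auto)

lemma F_pole_leaf_const:
  assumes t: "t = 0 \<or> t = 2*pi" and "z \<in> ball 0 1" "w \<in> ball 0 1" "norm \<zeta> = 1" "norm \<zeta>' = 1"
  shows "F (z, (\<zeta>, t)) = F (w, (\<zeta>', t))"
proof -
  have X: "(1, t) \<in> X0" using t by (auto simp: X0_def)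
  have orbit: "F (g y, (1, t)) = F (y, (1, t))" if g: "g \<in> \<Gamma>" and y: "y \<in> ball 0 1" for g y
  proof -
    have "arc_act g (1, t) = (g 1, t)" using t by (auto simp: arc_act_def)
    then have "F (g y, (g 1, t)) = F (y, (1, t))" using invariant[OF g y X] by simp
    moreover have "norm (g y) < 1" "norm (g 1) = 1"
      using disc_aut_ball disc_aut_sphere disc_aut[OF g] y by auto
    then have "F (g y, (g 1, t)) = F (g y, (1, t))" using pole_const[of "g y" "g 1" 1 t] t by simp
    ultimately show ?thesis by simp
  qed
  have "(\<lambda>y. F (y, (1, t))) constant_on ball 0 1"
  proof (rule holomorphic_constant_on_if_values_on_compact[OF holomorphic[OF X] _ _ compact_K K_subset])
    show "\<exists>k\<in>K. F (y, (1, t)) = F (k, (1, t))" if y: "y \<in> ball 0 1" for y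
    proof -
      obtain g where g: "g \<in> \<Gamma>" "g y \<in> K" using orbit_meets_K[OF y] by blast
      have "F (y, (1, t)) = F (g y, (1, t))" using orbit[OF g(1) y] by simp
      then show ?thesis using g(2) by blast
    qed
  qed auto
  then obtain c where "\<And>y. y \<in> ball 0 1 \<Longrightarrow> F (y, (1, t)) = c" unfolding constant_on_def by blast
  then have "F (z, (1, t)) = F (w, (1, t))" using assms(2,3) by simp
  then show ?thesis using pole_const[of z \<zeta> 1 t] pole_const[of w \<zeta>' 1 t] assms by simp
qed

lemma F_bounded:
  obtains M where "\<And>z x. z \<in> ball 0 1 \<Longrightarrow> x \<in> X0 \<Longrightarrow> norm (F (z, x)) \<le> M"
proof -
  have "bounded (F ` (K \<times> X0))"
    by (intro compact_imp_bounded compact_continuous_image continuous_on_K_X0 compact_Times compact_K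
        compact_X0)
  then obtain M where M: "\<And>y. y \<in> K \<times> X0 \<Longrightarrow> norm (F y) \<le> M" unfolding bounded_iff by blast
  have "norm (F (z, x)) \<le> M" if z: "z \<in> ball 0 1" and x: "x \<in> X0" for z x
  proof -
    obtain g where g: "g \<in> \<Gamma>" "g z \<in> K" using orbit_meets_K[OF z] by blast
    then have "(g z, arc_act g x) \<in> K \<times> X0" using arc_act_mem_X0 disc_aut x by auto
    then have "norm (F (g z, arc_act g x)) \<le> M" by (rule M)
    then show ?thesis using invariant[OF g(1) z x] by simp
  qed
  then show ?thesis using that by blast
qed

lemma K_norm_bound:
  obtains r where "r < 1" "\<And>k. k \<in> K \<Longrightarrow> norm k \<le> r"
proof (cases "K = {}")
  case False
  obtain k0 where "k0 \<in> K" "\<And>k. k \<in> K \<Longrightarrow> norm k \<le> norm k0"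
    using continuous_attains_sup[OF compact_K False continuous_on_norm_id] by blast
  then show ?thesis using that[of "norm k0"] K_subset by auto
qed (use that[of 0] in auto)

lemma F_near_pole_value:
  assumes \<epsilon>: "\<epsilon> > 0"
  obtains s where "0 < s" "s \<le> pi/2"
    "\<And>k \<zeta> \<theta>. k \<in> K \<Longrightarrow> norm \<zeta> = 1 \<Longrightarrow> 0 \<le> \<theta> \<Longrightarrow> \<theta> < s \<Longrightarrow> norm (F (k, (\<zeta>, \<theta>)) - F (0, (1, 0))) < \<epsilon>"
proof -
  have "uniformly_continuous_on (K \<times> X0) F"
    by (intro compact_uniformly_continuous continuous_on_K_X0 compact_Times compact_K compact_X0)
  then obtain \<tau> where \<tau>: "\<tau> > 0"
    "\<forall>y\<in>K \<times> X0. \<forall>y'\<in>K \<times> X0. dist y' y < \<tau> \<longrightarrow> dist (F y') (F y) < \<epsilon>"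
    using \<epsilon> unfolding uniformly_continuous_on_def by blast
  have "norm (F (k, (\<zeta>, \<theta>)) - F (0, (1, 0))) < \<epsilon>"
    if k: "k \<in> K" and \<zeta>: "norm \<zeta> = 1" and \<theta>: "0 \<le> \<theta>" "\<theta> < min \<tau> (pi/2)" for k \<zeta> \<theta>
  proof -
    have "(k, (\<zeta>, \<theta>)) \<in> K \<times> X0" "(k, (\<zeta>, 0)) \<in> K \<times> X0" using k \<zeta> \<theta> by (auto simp: X0_def)
    moreover have "dist (k, (\<zeta>, \<theta>)) (k, (\<zeta>, 0)) < \<tau>" using \<theta> by (simp add: dist_Pair_Pair dist_real_def)
    ultimately have "dist (F (k, (\<zeta>, \<theta>))) (F (k, (\<zeta>, 0))) < \<epsilon>" using \<tau>(2) by blast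
    moreover have "F (k, (\<zeta>, 0)) = F (0, (1, 0))" using F_pole_leaf_const[of 0 k 0 \<zeta> 1] k K_subset \<zeta> by auto
    ultimately show ?thesis by (simp add: dist_norm)
  qed
  moreover have "0 < min \<tau> (pi/2)" "min \<tau> (pi/2) \<le> pi/2" using \<tau>(1) by auto
  ultimately show ?thesis using that by blast
qed

text \<open>Move \<open>z\<close> into \<open>K\<close> by some \<open>g \<in> \<Gamma>\<close>. As \<open>z\<close> approaches a boundary point far from the arc,
  \<open>g\<close> crushes the arc, so the leaf \<open>arc_act g (\<zeta>, \<theta>)\<close> approaches the pole \<open>t = 0\<close>.\<close>
lemma F_arc_leaf_near_pole_value:
  assumes \<zeta>: "norm \<zeta> = 1" and \<theta>: "0 < \<theta>" "\<theta> < 2*pi" and \<epsilon>: "\<epsilon> > 0"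
  shows "\<exists>\<eta>>0. \<forall>z\<in>ball 0 1. \<forall>p. norm p = 1 \<longrightarrow> norm (p - - \<zeta> * cis (\<theta>/2)) \<le> (1 + cos (\<theta>/2)) / 2
           \<longrightarrow> norm (z - p) < \<eta> \<longrightarrow> norm (F (z, (\<zeta>, \<theta>)) - F (0, (1, 0))) < \<epsilon>"
proof -
  define m where "m = - \<zeta> * cis (\<theta>/2)"
  define c where "c = (1 + cos (\<theta>/2)) / 2"
  have c: "c > 0" unfolding c_def using cos_monotone_0_pi[of "\<theta>/2" pi] \<theta> by simp
  obtain r where r: "r < 1" "\<And>k. k \<in> K \<Longrightarrow> norm k \<le> r" by (rule K_norm_bound) (rule that)
  obtain s where s: "0 < s" "s \<le> pi/2" and pole:
    "\<And>k \<zeta> \<theta>. k \<in> K \<Longrightarrow> norm \<zeta> = 1 \<Longrightarrow> 0 \<le> \<theta> \<Longrightarrow> \<theta> < s \<Longrightarrow> norm (F (k, (\<zeta>, \<theta>)) - F (0, (1, 0))) < \<epsilon>"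
    by (rule F_near_pole_value[OF \<epsilon>]) (rule that)
  have "sin s > 0" using s by (intro sin_gt_zero) auto
  then obtain \<eta> where \<eta>: "\<eta> > 0" and crush:
    "\<And>g z p u v. disc_aut g \<Longrightarrow> norm z < 1 \<Longrightarrow> norm (g z) \<le> r \<Longrightarrow> norm p = 1 \<Longrightarrow> norm (z - p) < \<eta>
       \<Longrightarrow> norm u = 1 \<Longrightarrow> norm v = 1 \<Longrightarrow> c \<le> norm (u - p) \<Longrightarrow> c \<le> norm (v - p)
       \<Longrightarrow> norm (g u - g v) < sin s"
    using disc_aut_contracts_far_from[OF r(1) c] by blast
  have near: "norm (F (z, (\<zeta>, \<theta>)) - F (0, (1, 0))) < \<epsilon>"
    if z: "z \<in> ball 0 1" and p: "norm p = 1" "norm (p - m) \<le> c" "norm (z - p) < \<eta>" for z p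
  proof -
    obtain g where g: "g \<in> \<Gamma>" "g z \<in> K" using orbit_meets_K[OF z] by blast
    obtain \<theta>' where \<theta>': "arc_act g (\<zeta>, \<theta>) = (g \<zeta>, \<theta>')" "0 < \<theta>'" "\<theta>' < 2*pi"
      and arc: "arc_of (g \<zeta>) \<theta>' = g ` arc_of \<zeta> \<theta>"
      by (rule arc_act_disc_aut[OF disc_aut[OF g(1)] \<zeta> \<theta>])
    have far: "c \<le> norm (u - p)" if u: "u \<in> arc_of \<zeta> \<theta>" for u
    proof -
      have "2 * c \<le> norm (u - m)"
        using norm_arc_of_plus_midpoint_ge[OF \<zeta> _ _ u] \<theta> unfolding m_def c_def by simp
      then show ?thesis using p(2) norm_triangle_ineq[of "u - p" "p - m"] by simp
    qed
    have g\<zeta>: "norm (g \<zeta>) = 1" using disc_aut_sphere[OF disc_aut[OF g(1)] \<zeta>] .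
    have "\<theta>' < s"
    proof (rule arc_of_angle_lt[OF g\<zeta> \<theta>'(2,3)])
      show "0 \<le> s" "s < 2*pi" using s by auto
      fix w w' assume "w \<in> arc_of (g \<zeta>) \<theta>'" "w' \<in> arc_of (g \<zeta>) \<theta>'"
      then obtain u u' where u: "u \<in> arc_of \<zeta> \<theta>" "u' \<in> arc_of \<zeta> \<theta>" and w: "w = g u" "w' = g u'"
        unfolding arc by blast
      have "norm z < 1" "norm u = 1" "norm u' = 1" using z norm_mem_arc_of[OF \<zeta>] u by auto
      then show "norm (w - w') < sin s" unfolding w
        by (rule crush[OF disc_aut[OF g(1)] _ r(2)[OF g(2)] p(1) p(3) _ _ far[OF u(1)] far[OF u(2)]])
    qed
    moreover have "F (z, (\<zeta>, \<theta>)) = F (g z, (g \<zeta>, \<theta>'))"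
      using invariant[OF g(1) z, of "(\<zeta>, \<theta>)"] \<theta>'(1) \<zeta> \<theta> by (simp add: X0_def)
    ultimately show ?thesis using pole[OF g(2) g\<zeta>] \<theta>'(2) by simp
  qed
  show ?thesis
  proof (intro exI[of _ \<eta>] conjI \<eta> ballI allI impI)
    fix z p assume "z \<in> ball 0 1" "norm p = 1" "norm (p - - \<zeta> * cis (\<theta>/2)) \<le> (1 + cos (\<theta>/2)) / 2"
      "norm (z - p) < \<eta>"
    then show "norm (F (z, (\<zeta>, \<theta>)) - F (0, (1, 0))) < \<epsilon>" by (rule near[unfolded m_def c_def])
  qed
qed

lemma F_arc_leaf_eq_pole_value:
  assumes \<zeta>: "norm \<zeta> = 1" and \<theta>: "0 < \<theta>" "\<theta> < 2*pi" and z: "z \<in> ball 0 1"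
  shows "F (z, (\<zeta>, \<theta>)) = F (0, (1, 0))"
proof -
  let ?c0 = "F (0, (1, 0))"
  have X: "(\<zeta>, \<theta>) \<in> X0" using \<zeta> \<theta> by (simp add: X0_def)
  have hol: "(\<lambda>z. F (z, (\<zeta>, \<theta>)) - ?c0) holomorphic_on ball 0 1"
    by (intro holomorphic_intros holomorphic[OF X])
  obtain M where M: "\<And>z x. z \<in> ball 0 1 \<Longrightarrow> x \<in> X0 \<Longrightarrow> norm (F (z, x)) \<le> M" by (rule F_bounded) (rule that)
  have "norm (F (y, (\<zeta>, \<theta>)) - ?c0) \<le> M + norm ?c0" if "y \<in> ball 0 1" for y
    using M[OF that X] norm_triangle_ineq4[of "F (y, (\<zeta>, \<theta>))" ?c0] by linarith
  then have bdd: "bounded ((\<lambda>z. F (z, (\<zeta>, \<theta>)) - ?c0) ` ball 0 1)"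
    by (intro boundedI[where B = "M + norm ?c0"]) auto
  have m: "norm (- \<zeta> * cis (\<theta>/2)) = 1" using \<zeta> by (simp add: norm_mult)
  have c: "0 < (1 + cos (\<theta>/2)) / 2" using cos_monotone_0_pi[of "\<theta>/2" pi] \<theta> by simp
  have "F (z, (\<zeta>, \<theta>)) - ?c0 = 0"
    by (rule holomorphic_eq_0_if_tendsto_0_at_arc[OF hol bdd m c F_arc_leaf_near_pole_value[OF \<zeta> \<theta>] z])
  then show ?thesis by simp
qed

end

lemma surface_group_disc_aut:
  assumes "surface_group \<Gamma>" "g \<in> \<Gamma>"
  shows "disc_aut g"
proof -
  have "\<forall>g\<in>\<Gamma>. disc_aut g" using assms(1) unfolding surface_group_def by (elim conjE) assumption
  then show ?thesis using assms(2) by blast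
qed

lemma surface_group_orbits_meet_compact:
  assumes "surface_group \<Gamma>"
  obtains K where "compact K" "K \<subseteq> ball 0 1" "\<And>z. z \<in> ball 0 1 \<Longrightarrow> \<exists>h\<in>\<Gamma>. h z \<in> K"
proof -
  have inverse: "\<forall>g\<in>\<Gamma>. \<exists>h\<in>\<Gamma>. \<forall>z\<in>cball 0 1. h (g z) = z \<and> g (h z) = z"
    using assms unfolding surface_group_def by (elim conjE) assumption
  have cover: "\<exists>K. compact K \<and> K \<subseteq> ball 0 1 \<and> ball 0 1 = (\<Union>g\<in>\<Gamma>. g ` K)"
    using assms unfolding surface_group_def by (elim conjE) assumption
  obtain K where K: "compact K" "K \<subseteq> ball 0 1" "ball 0 1 = (\<Union>g\<in>\<Gamma>. g ` K)" using cover by blast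
  have "\<exists>h\<in>\<Gamma>. h z \<in> K" if "z \<in> ball 0 1" for z
  proof -
    have "z \<in> (\<Union>g\<in>\<Gamma>. g ` K)" using that K(3) by simp
    then obtain g k where g: "g \<in> \<Gamma>" "k \<in> K" "z = g k" by blast
    obtain h where h: "h \<in> \<Gamma>" "\<forall>u\<in>cball 0 1. h (g u) = u \<and> g (h u) = u" using inverse g(1) by blast
    have "k \<in> cball 0 1" using g(2) K(2) by auto
    then have "h z = k" using h(2) g(3) by simp
    then show ?thesis using h(1) g(2) by blast
  qed
  with K(1,2) show ?thesis by (rule that)
qed

theorem mainTheorem8:
  fixes \<Gamma> :: "(complex \<Rightarrow> complex) set"
    and F :: "complex \<times> (complex \<times> real) \<Rightarrow> complex"
  assumes "surface_group \<Gamma>"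
    and "continuous_on (ball 0 1 \<times> X0) F"
    and "\<And>z \<zeta> \<zeta>'. z \<in> ball 0 1 \<Longrightarrow> \<zeta> \<in> sphere 0 1 \<Longrightarrow> \<zeta>' \<in> sphere 0 1 \<Longrightarrow>
           F (z, (\<zeta>, 0)) = F (z, (\<zeta>', 0))"
    and "\<And>z \<zeta> \<zeta>'. z \<in> ball 0 1 \<Longrightarrow> \<zeta> \<in> sphere 0 1 \<Longrightarrow> \<zeta>' \<in> sphere 0 1 \<Longrightarrow>
           F (z, (\<zeta>, 2*pi)) = F (z, (\<zeta>', 2*pi))"
    and "\<And>g z x. g \<in> \<Gamma> \<Longrightarrow> z \<in> ball 0 1 \<Longrightarrow> x \<in> X0 \<Longrightarrow> F (g z, arc_act g x) = F (z, x)"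
    and "\<And>x. x \<in> X0 \<Longrightarrow> (\<lambda>z. F (z, x)) holomorphic_on ball 0 1"
  shows "\<forall>x\<in>X0. \<forall>z\<in>ball 0 1. \<forall>w\<in>ball 0 1. F (z, x) = F (w, x)"
proof -
  obtain K where K: "compact K" "K \<subseteq> ball 0 1" "\<And>z. z \<in> ball 0 1 \<Longrightarrow> \<exists>h\<in>\<Gamma>. h z \<in> K"
    using surface_group_orbits_meet_compact[OF assms(1)] by blast
  interpret leafwise_holomorphic_invariant \<Gamma> K F
  proof
    show "F (z, (\<zeta>, t)) = F (z, (\<zeta>', t))"
      if "z \<in> ball 0 1" "norm \<zeta> = 1" "norm \<zeta>' = 1" "t = 0 \<or> t = 2*pi" for z \<zeta> \<zeta>' t
      using that assms(3)[of z \<zeta> \<zeta>'] assms(4)[of z \<zeta> \<zeta>'] by auto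
  qed (fact surface_group_disc_aut[OF assms(1)] K assms(2,5,6))+
  show ?thesis
  proof (intro ballI)
    fix x and z w :: complex assume x: "x \<in> X0" and z: "z \<in> ball 0 1" and w: "w \<in> ball 0 1"
    obtain \<zeta> t where x_eq: "x = (\<zeta>, t)" and \<zeta>: "norm \<zeta> = 1" and t: "0 \<le> t" "t \<le> 2*pi"
      using x unfolding X0_def by auto
    show "F (z, x) = F (w, x)"
    proof (cases "t = 0 \<or> t = 2*pi")
      case True
      then show ?thesis using F_pole_leaf_const[OF True z w \<zeta> \<zeta>] x_eq by simp
    next
      case False
      then have "0 < t" "t < 2*pi" using t by auto
      then show ?thesis using F_arc_leaf_eq_pole_value[OF \<zeta> _ _ z] F_arc_leaf_eq_pole_value[OF \<zeta> _ _ w] x_eq by simp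
    qed
  qed
qed

end
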